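(* Let $0\le r<1$. In the RRH with redirection parameter $r$, for every fixed integer $k\ge 1$, $$\lim_{N\to\infty}\frac{\mathbb{E}[\mathcal{N}_k(N)]}{N}=\frac{1-r}{(k-r+1)(k-r)}.$$
   Context: The RRH with redirection parameter $r\in[0,1)$ is the following random hypergraph process. At size $N=1$ it has vertex set $\{v_1\}$ and edge set $\{\{v_1\}\}$. Given the hypergraph of size $N$ (vertices $v_1,\dots,v_N$, $N$ edges), choose an existing edge $e$ uniformly at random and add a new vertex $v_{N+1}$ and one new edge, as follows. If $e=\{v_1\}$, the new edge is $\{v_1,v_{N+1}\}$. Otherwise write $e=\{v_{i_1},\dots,v_{i_n}\}$ with $1=i_1<\dots<i_n$, $n\ge2$; independently, with probability $1-r$ the new edge is $e\cup\{v_{N+1}\}$ and with probability $r$ it is $\{v_{i_1},\dots,v_{i_{n-1}},v_{N+1}\}$. The degree of a vertex is the number of edges containing it; $\mathcal{N}_k(N)$ is the number of vertices of degree $k$ at size $N$. *)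

theory Defs
  imports "HOL-Probability.Probability"
begin

text \<open>A hypergraph of size N is represented by its list of edges (length N);
  vertex v_i is the natural number i, so the vertex set is {1..N}.
  The i-th edge of the list (0-based) is the one added when going to size i+1.\<close>

type_synonym hg = "nat set list"

definition rrh_step :: "real \<Rightarrow> hg \<Rightarrow> hg pmf" where
  "rrh_step r es =
     bind_pmf (pmf_of_set {..<length es}) (\<lambda>i.
       let e = es ! i; v = length es + 1 in
       if e = {1} then return_pmf (es @ [{1, v}])
       else bind_pmf (bernoulli_pmf r) (\<lambda>b.
         return_pmf (es @ [if b then insert v (e - {Max e}) else insert v e])))"

text \<open>Distribution of the RRH at size N (N \<ge> 1); size 0 is a dummy equal to size 1.\<close>
fun rrh :: "real \<Rightarrow> nat \<Rightarrow> hg pmf" where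
  "rrh r 0 = return_pmf [{1}]"
| "rrh r (Suc 0) = return_pmf [{1}]"
| "rrh r (Suc (Suc n)) = bind_pmf (rrh r (Suc n)) (rrh_step r)"

definition hdeg :: "hg \<Rightarrow> nat \<Rightarrow> nat" where
  "hdeg es v = card {i. i < length es \<and> v \<in> es ! i}"

definition Nk :: "nat \<Rightarrow> hg \<Rightarrow> nat" where
  "Nk k es = card {v \<in> {1..length es}. hdeg es v = k}"

end

theory Submission
  imports Defs
begin

text \<open>
  The root v_1 lies in every edge and the newest vertex in exactly one, so only the vertices
  u = 2, \<dots>, N matter. Such a u is the largest element of exactly one edge, the one created
  together with it, and redirection can only drop u from a copy of that edge. Hence u joins the
  new edge with probability (deg u - r) / N, and the means a_k(N) = E[N_k(N)] satisfy,
  for N > k,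
    a_k(N+1) = (1 - (k - r)/N) a_k(N) + (k - 1 - r)/N a_(k-1)(N) + [k = 1].
  A recurrence x(N+1) = (1 - \<alpha>/N) x(N) + b(N) with b(N) \<rightarrow> \<beta> forces
  x(N)/N \<rightarrow> \<beta>/(1 + \<alpha>), because N |x(N)/N - \<beta>/(1 + \<alpha>)| grows sublinearly;
  induction on k gives the limits.
\<close>

lemma sublinear_if_increments_tendsto_zero:
  fixes y e :: "nat \<Rightarrow> real"
  assumes step: "\<forall>\<^sub>F n in sequentially. y (Suc n) \<le> y n + e n"
    and e: "e \<longlonglongrightarrow> 0" and nonneg: "\<And>n. 0 \<le> y n"
  shows "(\<lambda>n. y n / n) \<longlonglongrightarrow> 0"
proof (rule LIMSEQ_I)
  fix \<epsilon> :: real assume "\<epsilon> > 0"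
  then have "\<forall>\<^sub>F n in sequentially. y (Suc n) \<le> y n + e n \<and> e n < \<epsilon> / 2"
    using step order_tendstoD(2)[OF e, of "\<epsilon> / 2"] by (auto elim: eventually_elim2)
  then obtain M where M: "\<And>n. n \<ge> M \<Longrightarrow> y (Suc n) \<le> y n + \<epsilon> / 2"
    unfolding eventually_sequentially by force
  have linear_bound: "y n \<le> y M + n * (\<epsilon> / 2)" if "n \<ge> M" for n
    using that
  proof (induction n rule: dec_induct)
    case base
    then show ?case using \<open>\<epsilon> > 0\<close> by simp
  next
    case (step n)
    then show ?case using M[of n] by (simp add: field_simps)
  qed
  obtain M' :: nat where M': "M' > 2 * y M / \<epsilon>"
    using reals_Archimedean2 by blast
  show "\<exists>n0. \<forall>n\<ge>n0. norm (y n / n - 0) < \<epsilon>"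
  proof (intro exI allI impI)
    fix n assume n: "n \<ge> max M (Suc M')"
    then have n_pos: "real n > 0" and "real n > 2 * y M / \<epsilon>"
      using M' by auto
    then have "y M / n < \<epsilon> / 2"
      using \<open>\<epsilon> > 0\<close> by (simp add: field_simps)
    moreover have "y n / n \<le> y M / n + \<epsilon> / 2"
      using linear_bound[of n] n n_pos \<open>\<epsilon> > 0\<close> by (simp add: field_simps)
    ultimately have "y n / n < \<epsilon>"
      by linarith
    then show "norm (y n / n - 0) < \<epsilon>"
      using nonneg[of n] by simp
  qed
qed

lemma linear_recurrence_ratio_tendsto:
  fixes x b :: "nat \<Rightarrow> real"
  assumes "0 \<le> \<alpha>"
    and rec: "\<forall>\<^sub>F N in sequentially. x (Suc N) = (1 - \<alpha> / N) * x N + b N"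
    and b: "b \<longlonglongrightarrow> \<beta>"
  shows "(\<lambda>N. x N / N) \<longlonglongrightarrow> \<beta> / (1 + \<alpha>)"
proof -
  define z where "z N = x N / N - \<beta> / (1 + \<alpha>)" for N
  have z_rec: "Suc N * z (Suc N) = (N - \<alpha>) * z N + (b N - \<beta>)"
    if "N \<ge> 1" and "x (Suc N) = (1 - \<alpha> / N) * x N + b N" for N
  proof -
    have "real N > 0" "1 + \<alpha> > 0"
      using that(1) \<open>0 \<le> \<alpha>\<close> by auto
    then show ?thesis
      unfolding z_def that(2) by (simp add: divide_simps) (simp add: algebra_simps)
  qed
  have "\<forall>\<^sub>F N in sequentially. Suc N * \<bar>z (Suc N)\<bar> \<le> N * \<bar>z N\<bar> + \<bar>b N - \<beta>\<bar>"
    using rec eventually_ge_at_top[of "max 1 (nat \<lceil>\<alpha>\<rceil>)"]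
  proof eventually_elim
    case (elim N)
    then have "\<alpha> \<le> N" "N \<ge> 1"
      by (auto simp: nat_le_iff ceiling_le_iff)
    then have "\<bar>Suc N * z (Suc N)\<bar> \<le> (N - \<alpha>) * \<bar>z N\<bar> + \<bar>b N - \<beta>\<bar>"
      using z_rec[OF _ elim(1)] abs_triangle_ineq[of "(N - \<alpha>) * z N" "b N - \<beta>"]
      by (simp add: abs_mult)
    moreover have "(N - \<alpha>) * \<bar>z N\<bar> \<le> N * \<bar>z N\<bar>"
      using \<open>0 \<le> \<alpha>\<close> by (intro mult_right_mono) auto
    ultimately show ?case
      by (simp add: abs_mult)
  qed
  then have "(\<lambda>N. N * \<bar>z N\<bar> / N) \<longlonglongrightarrow> 0"
    by (rule sublinear_if_increments_tendsto_zero)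
      (use b in \<open>simp_all add: tendsto_rabs_zero_iff LIM_zero\<close>)
  moreover have "\<forall>\<^sub>F N in sequentially. N * \<bar>z N\<bar> / N = \<bar>z N\<bar>"
    using eventually_gt_at_top[of 0] by eventually_elim simp
  ultimately have "(\<lambda>N. \<bar>z N\<bar>) \<longlonglongrightarrow> 0"
    by (rule Lim_transform_eventually)
  then have "z \<longlonglongrightarrow> 0"
    by (rule tendsto_rabs_zero_iff[THEN iffD1])
  then have "(\<lambda>N. z N + \<beta> / (1 + \<alpha>)) \<longlonglongrightarrow> 0 + \<beta> / (1 + \<alpha>)"
    by (intro tendsto_add) auto
  then show ?thesis
    by (simp add: z_def)
qed

lemma of_nat_card_filter: "finite A \<Longrightarrow> of_nat (card {x \<in> A. P x}) = (\<Sum>x\<in>A. if P x then 1 else 0)"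
  by (simp add: sum.inter_filter[symmetric])

lemma set_pmf_of_set_lessThan: "0 < (n::nat) \<Longrightarrow> set_pmf (pmf_of_set {..<n}) = {..<n}"
  by (intro set_pmf_of_set) auto

lemma expectation_cong_set_pmf:
  fixes f g :: "'a \<Rightarrow> real"
  assumes "\<And>x. x \<in> set_pmf p \<Longrightarrow> f x = g x"
  shows "measure_pmf.expectation p f = measure_pmf.expectation p g"
  using assms by (intro integral_cong_AE) (simp_all add: AE_measure_pmf_iff)

lemma expectation_affine_finite:
  fixes f :: "'a \<Rightarrow> real"
  assumes "finite (set_pmf p)"
  shows "measure_pmf.expectation p (\<lambda>x. a + b * f x) = a + b * measure_pmf.expectation p f"
  using assms by (simp add: integrable_measure_pmf_finite)

lemma expectation_bind_pmf_finite:
  fixes h :: "'b \<Rightarrow> real"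
  assumes "finite (set_pmf p)" "\<And>x. x \<in> set_pmf p \<Longrightarrow> finite (set_pmf (f x))"
  shows "measure_pmf.expectation (bind_pmf p f) h =
           measure_pmf.expectation p (\<lambda>x. measure_pmf.expectation (f x) h)"
  using assms
  by (simp add: pmf_expectation_bind[of "set_pmf p"] integral_measure_pmf_real[of "set_pmf p"]
      mult.commute)

lemma rrh_step_cases:
  assumes "es \<noteq> []" and "es' \<in> set_pmf (rrh_step r es)"
  obtains i where "i < length es" "es' = es @ [insert (length es + 1) (es ! i)]"
  | i where "i < length es" "es ! i \<noteq> {1}"
      "es' = es @ [insert (length es + 1) (es ! i - {Max (es ! i)})]"
  using assms
  by (auto simp: rrh_step_def Let_def set_pmf_of_set_lessThan insert_commute split: if_splits)

lemma finite_set_pmf_rrh_step: "es \<noteq> [] \<Longrightarrow> finite (set_pmf (rrh_step r es))"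
  by (simp add: rrh_step_def Let_def set_pmf_of_set_lessThan)

text \<open>Edge i is the one created together with vertex i + 1, its largest element.\<close>

definition rrh_shaped :: "nat \<Rightarrow> hg \<Rightarrow> bool" where
  "rrh_shaped N es \<longleftrightarrow>
     length es = N \<and> (\<forall>i<N. 1 \<in> es ! i \<and> Suc i \<in> es ! i \<and> es ! i \<subseteq> {1..Suc i})"

lemma rrh_shaped_Max_edge:
  assumes "rrh_shaped N es" and "i < N"
  shows "Max (es ! i) = Suc i"
proof -
  have "es ! i \<subseteq> {1..Suc i}" "Suc i \<in> es ! i"
    using assms by (auto simp: rrh_shaped_def)
  then show ?thesis
    by (intro Max_eqI) (auto intro: finite_subset)
qed

lemma rrh_shaped_step:
  assumes "rrh_shaped N es" and "0 < N" and "es' \<in> set_pmf (rrh_step r es)"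
  shows "rrh_shaped (Suc N) es'" and "es' = es @ [last es']"
proof -
  have len: "length es = N" and ne: "es \<noteq> []"
    using assms(1,2) by (auto simp: rrh_shaped_def)
  have edge: "1 \<in> es ! i" "Suc i \<in> es ! i" "es ! i \<subseteq> {1..Suc i}" if "i < N" for i
    using assms(1) that by (auto simp: rrh_shaped_def)
  obtain f where es': "es' = es @ [f]" and f: "1 \<in> f" "Suc N \<in> f" "f \<subseteq> {1..Suc N}"
    using ne assms(3)
  proof (cases rule: rrh_step_cases)
    case (1 i)
    then show ?thesis
      using that edge[of i] len by fastforce
  next
    case (2 i)
    have "i \<noteq> 0"
      using 2 edge[of 0] len by (auto simp: rrh_shaped_def)
    then have "1 \<in> es ! i - {Max (es ! i)}"
      using edge[of i] rrh_shaped_Max_edge[OF assms(1)] \<open>i < length es\<close> len by auto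
    then show ?thesis
      using that 2 edge[of i] len by fastforce
  qed
  show "rrh_shaped (Suc N) es'"
    using assms(1) es' f by (auto simp: rrh_shaped_def nth_append less_Suc_eq)
  show "es' = es @ [last es']"
    using es' by simp
qed

lemma rrh_support:
  "finite (set_pmf (rrh r (Suc n))) \<and> (\<forall>es\<in>set_pmf (rrh r (Suc n)). rrh_shaped (Suc n) es)"
proof (induction n)
  case 0
  then show ?case by (simp add: rrh_shaped_def)
next
  case (Suc n)
  have "es \<noteq> []" if "rrh_shaped (Suc n) es" for es
    using that by (auto simp: rrh_shaped_def)
  then show ?case
    using Suc rrh_shaped_step(1)[of "Suc n"]
    by (auto simp: set_bind_pmf finite_set_pmf_rrh_step)
qed

lemma finite_set_pmf_rrh: "finite (set_pmf (rrh r N))"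
  using rrh_support[of r "N - 1"] by (cases N) auto

lemma rrh_shaped_rrh: "0 < N \<Longrightarrow> es \<in> set_pmf (rrh r N) \<Longrightarrow> rrh_shaped N es"
  using rrh_support[of r "N - 1"] by auto

lemma expectation_rrh_Suc:
  fixes f :: "hg \<Rightarrow> real"
  assumes "0 < N"
  shows "measure_pmf.expectation (rrh r (Suc N)) f =
           measure_pmf.expectation (rrh r N) (\<lambda>es. measure_pmf.expectation (rrh_step r es) f)"
proof -
  obtain n where N: "N = Suc n"
    using assms gr0_implies_Suc by blast
  have "es \<noteq> []" if "es \<in> set_pmf (rrh r N)" for es
    using rrh_shaped_rrh[OF assms that] assms by (auto simp: rrh_shaped_def)
  then show ?thesis
    unfolding N
    by (simp add: expectation_bind_pmf_finite finite_set_pmf_rrh finite_set_pmf_rrh_step)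
qed

lemma hdeg_eq_sum: "real (hdeg es u) = (\<Sum>i<length es. if u \<in> es ! i then 1 else 0)"
  unfolding hdeg_def of_nat_card_filter[OF finite_lessThan, symmetric] by (simp add: lessThan_def)

lemma hdeg_snoc: "hdeg (es @ [f]) u = hdeg es u + (if u \<in> f then 1 else 0)"
proof -
  have "real (hdeg (es @ [f]) u) = real (hdeg es u + (if u \<in> f then 1 else 0))"
    by (simp add: hdeg_eq_sum nth_append)
  then show ?thesis
    by (simp only: of_nat_eq_iff)
qed

lemma hdeg_root: "rrh_shaped N es \<Longrightarrow> hdeg es 1 = N"
proof -
  assume "rrh_shaped N es"
  then have "{i. i < length es \<and> 1 \<in> es ! i} = {..<N}"
    by (auto simp: rrh_shaped_def)
  then show ?thesis
    by (simp add: hdeg_def)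
qed

lemma hdeg_newest: "rrh_shaped N es \<Longrightarrow> 0 < N \<Longrightarrow> hdeg es N = 1"
proof -
  assume shaped: "rrh_shaped N es" and "0 < N"
  have "{i. i < length es \<and> N \<in> es ! i} = {N - 1}"
  proof (intro equalityI subsetI)
    fix i assume i: "i \<in> {i. i < length es \<and> N \<in> es ! i}"
    then have "i < N"
      using shaped by (simp add: rrh_shaped_def)
    then have "es ! i \<subseteq> {1..Suc i}"
      using shaped by (simp add: rrh_shaped_def)
    then show "i \<in> {N - 1}"
      using i \<open>i < N\<close> by auto
  next
    fix i assume "i \<in> {N - 1}"
    moreover have "N - 1 < N"
      using \<open>0 < N\<close> by simp
    then have "Suc (N - 1) \<in> es ! (N - 1)" "length es = N"
      using shaped unfolding rrh_shaped_def by blast+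
    ultimately show "i \<in> {i. i < length es \<and> N \<in> es ! i}"
      using \<open>0 < N\<close> by simp
  qed
  then show ?thesis
    by (simp add: hdeg_def)
qed

lemma hdeg_pos: "rrh_shaped N es \<Longrightarrow> v \<in> {1..N} \<Longrightarrow> 0 < hdeg es v"
proof -
  assume shaped: "rrh_shaped N es" and v: "v \<in> {1..N}"
  then have "v - 1 < N"
    by auto
  then have "Suc (v - 1) \<in> es ! (v - 1)" "length es = N"
    using shaped unfolding rrh_shaped_def by blast+
  then have "v - 1 \<in> {i. i < length es \<and> v \<in> es ! i}"
    using v \<open>v - 1 < N\<close> by simp
  then show ?thesis
    unfolding hdeg_def by (auto simp: card_gt_0_iff)
qed

lemma Nk_0: "rrh_shaped N es \<Longrightarrow> Nk 0 es = 0"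
  using hdeg_pos by (fastforce simp: Nk_def rrh_shaped_def)

lemma Nk_eq_sum_nonroot:
  assumes shaped: "rrh_shaped N es" and "k \<noteq> N"
  shows "real (Nk k es) = (\<Sum>u\<in>{2..N}. if hdeg es u = k then 1 else 0)"
proof -
  have "real (Nk k es) = (\<Sum>v\<in>{1..N}. if hdeg es v = k then 1 else 0)"
    using shaped unfolding Nk_def of_nat_card_filter[OF finite_atLeastAtMost]
    by (simp add: rrh_shaped_def)
  also have "\<dots> = (\<Sum>u\<in>{2..N}. if hdeg es u = k then 1 else 0)"
  proof (cases "N = 0")
    case False
    then have "{1..N} = insert 1 {2..N}"
      by auto
    moreover have "hdeg es 1 \<noteq> k"
      using hdeg_root[OF shaped] \<open>k \<noteq> N\<close> by simp
    ultimately show ?thesis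
      by (simp only: sum.insert finite_atLeastAtMost) simp
  qed simp
  finally show ?thesis .
qed

lemma expectation_rrh_step_mem_new_edge:
  assumes shaped: "rrh_shaped N es" and "0 < N" and "0 \<le> r" "r \<le> 1" and u: "2 \<le> u" "u \<le> N"
  shows "measure_pmf.expectation (rrh_step r es) (\<lambda>es'. if u \<in> last es' then 1 else 0)
           = (real (hdeg es u) - r) / N"
proof -
  let ?X = "\<lambda>es'. if u \<in> last es' then 1 else (0::real)"
  define step_at where "step_at i = (let e = es ! i; v = length es + 1 in
       if e = {1} then return_pmf (es @ [{1, v}])
       else bind_pmf (bernoulli_pmf r) (\<lambda>b.
         return_pmf (es @ [if b then insert v (e - {Max e}) else insert v e])))" for i
  have len: "length es = N"
    using shaped by (simp add: rrh_shaped_def)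
  have step: "rrh_step r es = bind_pmf (pmf_of_set {..<N}) step_at"
    unfolding rrh_step_def step_at_def len ..
  have step_at: "measure_pmf.expectation (step_at i) ?X
      = (if u \<in> es ! i then 1 else 0) - (if i = u - 1 then r else 0)" if "i < N" for i
  proof (cases "es ! i = {1}")
    case True
    then have "i = 0"
      using shaped \<open>i < N\<close> by (auto simp: rrh_shaped_def)
    then show ?thesis
      using True u by (simp add: step_at_def len)
  next
    case False
    have "Suc i \<in> es ! i" "Max (es ! i) = Suc i"
      using shaped \<open>i < N\<close> rrh_shaped_Max_edge by (auto simp: rrh_shaped_def)
    then show ?thesis
      using False u \<open>0 \<le> r\<close> \<open>r \<le> 1\<close>
      by (auto simp: step_at_def len Let_def expectation_bind_pmf_finite)
  qed
  have "measure_pmf.expectation (rrh_step r es) ?X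
      = (\<Sum>i<N. (if u \<in> es ! i then 1 else 0) - (if i = u - 1 then r else 0)) / N"
  proof -
    have "finite (set_pmf (step_at i))" for i
      by (simp add: step_at_def Let_def)
    then show ?thesis
      unfolding step using \<open>0 < N\<close>
      by (subst pmf_expectation_bind_pmf_of_set)
        (auto simp: step_at sum_distrib_left divide_inverse_commute)
  qed
  also have "\<dots> = (real (hdeg es u) - r) / N"
    using u by (simp add: sum_subtractf hdeg_eq_sum len)
  finally show ?thesis .
qed

lemma expectation_rrh_step_degree_indicator:
  assumes shaped: "rrh_shaped N es" and "0 < N" and r: "0 \<le> r" "r \<le> 1"
    and u: "2 \<le> u" "u \<le> N" and "1 \<le> k"
  shows "measure_pmf.expectation (rrh_step r es) (\<lambda>es'. if hdeg es' u = k then 1 else 0)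
    = (if hdeg es u = k then 1 - (real k - r) / N else 0)
      + (if hdeg es u = k - 1 then (real k - 1 - r) / N else 0)"
proof -
  define d where "d = hdeg es u"
  let ?I = "\<lambda>P. if P then 1 else (0::real)"
  have "measure_pmf.expectation (rrh_step r es) (\<lambda>es'. if hdeg es' u = k then 1 else 0)
      = measure_pmf.expectation (rrh_step r es)
          (\<lambda>es'. ?I (d = k) + (?I (d = k - 1) - ?I (d = k)) * ?I (u \<in> last es'))"
  proof (rule expectation_cong_set_pmf)
    fix es' assume "es' \<in> set_pmf (rrh_step r es)"
    then have "hdeg es' u = d + (if u \<in> last es' then 1 else 0)"
      using rrh_shaped_step(2)[OF shaped \<open>0 < N\<close>] hdeg_snoc d_def by metis
    then show "?I (hdeg es' u = k) = ?I (d = k) + (?I (d = k - 1) - ?I (d = k)) * ?I (u \<in> last es')"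
      using \<open>1 \<le> k\<close> by auto
  qed
  also have "\<dots> = ?I (d = k) + (?I (d = k - 1) - ?I (d = k)) * ((real d - r) / N)"
    using expectation_rrh_step_mem_new_edge[OF shaped \<open>0 < N\<close> r u] shaped \<open>0 < N\<close>
    by (subst expectation_affine_finite) (auto simp: d_def finite_set_pmf_rrh_step rrh_shaped_def)
  also have "\<dots> = (if d = k then 1 - (real k - r) / N else 0)
      + (if d = k - 1 then (real k - 1 - r) / N else 0)"
    using \<open>1 \<le> k\<close> by (cases "d = k") (simp_all add: diff_divide_distrib of_nat_diff)
  finally show ?thesis
    unfolding d_def .
qed

lemma expectation_rrh_step_Nk:
  assumes shaped: "rrh_shaped N es" and r: "0 \<le> r" "r \<le> 1" and k: "1 \<le> k" "k < N"
  shows "measure_pmf.expectation (rrh_step r es) (\<lambda>es'. real (Nk k es'))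
    = (1 - (real k - r) / N) * Nk k es + ((real k - 1 - r) / N) * Nk (k - 1) es
      + (if k = 1 then 1 else 0)"
proof -
  have "0 < N"
    using k by simp
  have fin: "finite (set_pmf (rrh_step r es))"
    using shaped \<open>0 < N\<close> by (intro finite_set_pmf_rrh_step) (auto simp: rrh_shaped_def)
  let ?I = "\<lambda>k es' u. if hdeg es' u = k then 1 else (0::real)"
  have "measure_pmf.expectation (rrh_step r es) (\<lambda>es'. real (Nk k es'))
      = measure_pmf.expectation (rrh_step r es)
          (\<lambda>es'. (if k = 1 then 1 else 0) + (\<Sum>u\<in>{2..N}. ?I k es' u))"
  proof (rule expectation_cong_set_pmf)
    fix es' assume "es' \<in> set_pmf (rrh_step r es)"
    then have shaped': "rrh_shaped (Suc N) es'"
      by (rule rrh_shaped_step(1)[OF shaped \<open>0 < N\<close>])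
    have "{2..Suc N} = insert (Suc N) {2..N}"
      using \<open>0 < N\<close> by auto
    then have "real (Nk k es') = ?I k es' (Suc N) + (\<Sum>u\<in>{2..N}. ?I k es' u)"
      using Nk_eq_sum_nonroot[OF shaped'] k by simp
    then show "real (Nk k es') = (if k = 1 then 1 else 0) + (\<Sum>u\<in>{2..N}. ?I k es' u)"
      using hdeg_newest[OF shaped'] by simp
  qed
  also have "\<dots> = (if k = 1 then 1 else 0)
      + (\<Sum>u\<in>{2..N}. measure_pmf.expectation (rrh_step r es) (\<lambda>es'. ?I k es' u))"
    using fin by (simp add: integrable_measure_pmf_finite)
  also have "\<dots> = (if k = 1 then 1 else 0) + (\<Sum>u\<in>{2..N}.
      (1 - (real k - r) / N) * ?I k es u + ((real k - 1 - r) / N) * ?I (k - 1) es u)"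
    using expectation_rrh_step_degree_indicator[OF shaped \<open>0 < N\<close> r _ _ \<open>1 \<le> k\<close>]
    by (intro arg_cong2[where f = "(+)"] sum.cong) auto
  also have "\<dots> = (1 - (real k - r) / N) * Nk k es + ((real k - 1 - r) / N) * Nk (k - 1) es
      + (if k = 1 then 1 else 0)"
    using k by (simp add: Nk_eq_sum_nonroot[OF shaped] sum.distrib sum_distrib_left)
  finally show ?thesis .
qed

definition mean_Nk :: "real \<Rightarrow> nat \<Rightarrow> nat \<Rightarrow> real" where
  "mean_Nk r k N = measure_pmf.expectation (rrh r N) (\<lambda>es. real (Nk k es))"

lemma mean_Nk_recurrence:
  assumes r: "0 \<le> r" "r \<le> 1" and k: "1 \<le> k" "k < N"
  shows "mean_Nk r k (Suc N) = (1 - (real k - r) / N) * mean_Nk r k N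
           + ((if k = 1 then 1 else 0) + (real k - 1 - r) * (mean_Nk r (k - 1) N / N))"
proof -
  have "0 < N"
    using k by simp
  have "mean_Nk r k (Suc N) = measure_pmf.expectation (rrh r N) (\<lambda>es.
      (1 - (real k - r) / N) * Nk k es + ((real k - 1 - r) / N) * Nk (k - 1) es
      + (if k = 1 then 1 else 0))"
    unfolding mean_Nk_def expectation_rrh_Suc[OF \<open>0 < N\<close>]
    using expectation_rrh_step_Nk[OF rrh_shaped_rrh[OF \<open>0 < N\<close>] r k]
    by (intro expectation_cong_set_pmf) simp
  also have "\<dots> = (1 - (real k - r) / N) * mean_Nk r k N
      + ((if k = 1 then 1 else 0) + (real k - 1 - r) * (mean_Nk r (k - 1) N / N))"
    by (simp add: mean_Nk_def integrable_measure_pmf_finite finite_set_pmf_rrh)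
  finally show ?thesis .
qed

text \<open>No vertex has degree 0; the closed formula would not give 0 at k = 0.\<close>

definition degree_density :: "real \<Rightarrow> nat \<Rightarrow> real" where
  "degree_density r k = (if k = 0 then 0 else (1 - r) / ((real k - r + 1) * (real k - r)))"

lemma degree_density_Suc:
  assumes "0 \<le> r" "r < 1"
  shows "degree_density r (Suc j)
    = ((if j = 0 then 1 else 0) + (real j - r) * degree_density r j) / (1 + (real (Suc j) - r))"
proof (cases "j = 0")
  case True
  have "1 - r \<noteq> 0" "2 - r \<noteq> 0"
    using assms by auto
  then show ?thesis
    using True by (simp add: degree_density_def divide_simps)
next
  case False
  define t where "t = real j - r"
  have "t > 0"
    using False assms by (simp add: t_def)
  have "degree_density r j = (1 - r) / ((t + 1) * t)"
    "degree_density r (Suc j) = (1 - r) / ((t + 2) * (t + 1))"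
    "1 + (real (Suc j) - r) = t + 2"
    using False by (simp_all add: degree_density_def t_def algebra_simps)
  moreover have "t * ((1 - r) / ((t + 1) * t)) = (1 - r) / (t + 1)"
    using \<open>t > 0\<close> by simp
  ultimately show ?thesis
    using False by (simp add: t_def[symmetric] mult.commute)
qed

lemma mean_Nk_ratio_tendsto:
  assumes "0 \<le> r" "r < 1"
  shows "(\<lambda>N. mean_Nk r k N / N) \<longlonglongrightarrow> degree_density r k"
proof (induction k)
  case 0
  have mean_Nk_0: "mean_Nk r 0 N = 0" if "0 < N" for N
  proof -
    have "mean_Nk r 0 N = measure_pmf.expectation (rrh r N) (\<lambda>_. 0)"
      unfolding mean_Nk_def
      by (rule expectation_cong_set_pmf) (simp add: Nk_0[OF rrh_shaped_rrh[OF that]])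
    then show ?thesis
      by simp
  qed
  have "(\<lambda>N. mean_Nk r 0 N / N) = (\<lambda>_. 0)"
  proof
    fix N
    show "mean_Nk r 0 N / N = 0"
      using mean_Nk_0 by (cases "N = 0") auto
  qed
  then show ?case
    by (simp add: degree_density_def)
next
  case (Suc j)
  have "\<forall>\<^sub>F N in sequentially.
      mean_Nk r (Suc j) (Suc N) = (1 - (real (Suc j) - r) / N) * mean_Nk r (Suc j) N
        + ((if j = 0 then 1 else 0) + (real j - r) * (mean_Nk r j N / N))"
    using eventually_gt_at_top[of "Suc j"]
    by eventually_elim (use mean_Nk_recurrence[of r "Suc j"] assms in auto)
  moreover have "(\<lambda>N. (if j = 0 then 1 else 0) + (real j - r) * (mean_Nk r j N / N))
      \<longlonglongrightarrow> (if j = 0 then 1 else 0) + (real j - r) * degree_density r j"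
    by (intro tendsto_intros Suc.IH)
  ultimately show ?case
    unfolding degree_density_Suc[OF assms]
    by (rule linear_recurrence_ratio_tendsto[rotated]) (use assms in simp)
qed

theorem mainTheorem14:
  fixes r :: real and k :: nat
  assumes "0 \<le> r" and "r < 1" and "1 \<le> k"
  shows "(\<lambda>N. measure_pmf.expectation (rrh r N) (\<lambda>es. real (Nk k es)) / real N)
           \<longlonglongrightarrow> (1 - r) / ((real k - r + 1) * (real k - r))"
  using mean_Nk_ratio_tendsto[OF assms(1,2), of k] assms(3)
  by (simp add: mean_Nk_def degree_density_def)

end
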